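(* For all processes $s,t$, $D_{\mathcal{L}}(s,t)=0$ if and only if $s$ and $t$ are strong probabilistic trace equivalent.
   Context: PTS $(\mathcal{S},A,\to)$ with finitely supported distributions; processes image-finite and finite. Computations $c=s_0\xrightarrow{a_1}\cdots\xrightarrow{a_n}s_n$ via transitions $s_{i-1}\xrightarrow{a_i}\pi_i$, $s_i\in\mathrm{supp}(\pi_i)$; $\Pr(c)=\prod\pi_i(s_i)$ (empty: 1); $|c|=n$; $\mathrm{tr}(c)=a_1\cdots a_n$; $\mathcal{C}(z,\alpha)$ computations from $z$ with trace $\alpha$; maximal = not a proper prefix of another computation from the same process; $\mathcal{C}_{\max}(z)$; $\Pr$ of a set is the sum. A resolution of $s$ is a PTS $\mathcal{Z}=(Z,A,\to_{\mathcal{Z}})$ with $\mathrm{corr}\colon Z\to\mathcal{S}$ and initial state $z_s$, $\mathrm{corr}(z_s)=s$, such that $z_s$ is in no target support, every other state is in the support of a target of a transition from a different state, every $z\xrightarrow{a}_{\mathcal{Z}}\pi$ is matched by $\mathrm{corr}(z)\xrightarrow{a}\pi'$ with $\pi(z')=\pi'(\mathrm{corr}(z'))$, and each state has at most one outgoing transition; $\mathrm{res}(s)$ the set of resolutions. $s,t$ are strong probabilistic trace equivalent iff for each $\mathcal{Z}_s\in\mathrm{res}(s)$ there is $\mathcal{Z}_t\in\mathrm{res}(t)$ with $\Pr(\mathcal{C}(z_s,\alpha))=\Pr(\mathcal{C}(z_t,\alpha))$ for all $\alpha\in A^\star$, and symmetrically. Logic $\mathcal{L}$: trace formulae $\Phi::=\top\mid\langle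 a\rangle\Phi$, $\mathrm{depth}(\top)=0$, $\mathrm{depth}(\langle a\rangle\Phi)=1+\mathrm{depth}(\Phi)$; trace distribution formulae $\bigoplus_{i\in I}r_i\Phi_i$ ($I$ finite nonempty, $\Phi_i$ pairwise distinct, $r_i\in(0,1]$, $\sum r_i=1$), identified with distributions on trace formulae. $c\models\top$ always; $c\models\langle a\rangle\Phi$ iff $c=s\xrightarrow{a}c'$ with $c'\models\Phi$. $s\models\bigoplus_i r_i\Phi_i$ iff some $\mathcal{Z}\in\mathrm{res}(s)$ with initial state $z$ satisfies $\Pr(\{c\in\mathcal{C}_{\max}(z):c\models\Phi_i,|c|=\mathrm{depth}(\Phi_i)\})=r_i$ for all $i$; $\mathcal{L}(s)$ the set of formulae satisfied by $s$. $d(\Phi_1,\Phi_2)=0$ if equal, else $1$; $D(\Psi_1,\Psi_2)=\min_\omega\sum\omega(\Phi,\Phi')d(\Phi,\Phi')$ over couplings $\omega$ of $\Psi_1,\Psi_2$. Hausdorff lifting: $\mathcal{H}(D)(X,Y)=\max\{\sup_{x\in X}\inf_{y\in Y}D(x,y),\sup_{y\in Y}\inf_{x\in X}D(y,x)\}$ ($\inf\emptyset=1$, $\sup\emptyset=0$). $D_{\mathcal{L}}(s,t)=\mathcal{H}(D)(\mathcal{L}(s),\mathcal{L}(t))$. *)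

theory Defs
  imports "HOL-Probability.Probability"
begin

(* A PTS over states 's and actions 'a is given by its transition relation
   T :: ('s * 'a * 's pmf) set ; (s, a, pi) : T means  s --a--> pi. *)

type_synonym ('s,'a) pts = "('s \<times> 'a \<times> 's pmf) set"

definition pts_ok :: "('s,'a) pts \<Rightarrow> bool" where
  "pts_ok T \<longleftrightarrow> (\<forall>(s,a,\<pi>)\<in>T. finite (set_pmf \<pi>)) \<and>
                 (\<forall>s a. finite {\<pi>. (s,a,\<pi>) \<in> T})"

(* A computation  z0 --a1--> z1 ... --an--> zn  from z0 is represented by the
   list of its steps [(a1,pi1,z1),...,(an,pin,zn)], where z_{i-1} --ai--> pi_i
   and z_i in supp(pi_i). *)
fun is_comp :: "('x,'a) pts \<Rightarrow> 'x \<Rightarrow> ('a \<times> 'x pmf \<times> 'x) list \<Rightarrow> bool" where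
  "is_comp T z [] = True"
| "is_comp T z ((a,\<pi>,z')#cs) = ((z,a,\<pi>) \<in> T \<and> z' \<in> set_pmf \<pi> \<and> is_comp T z' cs)"

definition comps :: "('x,'a) pts \<Rightarrow> 'x \<Rightarrow> ('a \<times> 'x pmf \<times> 'x) list set" where
  "comps T z = {c. is_comp T z c}"

definition comp_prob :: "('a \<times> 'x pmf \<times> 'x) list \<Rightarrow> real" where
  "comp_prob c = prod_list (map (\<lambda>(a,\<pi>,z'). pmf \<pi> z') c)"

definition set_prob :: "('a \<times> 'x pmf \<times> 'x) list set \<Rightarrow> real" where
  "set_prob C = (\<Sum>c\<in>C. comp_prob c)"

definition trace_of :: "('a \<times> 'x pmf \<times> 'x) list \<Rightarrow> 'a list" where
  "trace_of c = map fst c"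

definition comps_tr :: "('x,'a) pts \<Rightarrow> 'x \<Rightarrow> 'a list \<Rightarrow> ('a \<times> 'x pmf \<times> 'x) list set" where
  "comps_tr T z \<alpha> = {c \<in> comps T z. trace_of c = \<alpha>}"

definition comps_max :: "('x,'a) pts \<Rightarrow> 'x \<Rightarrow> ('a \<times> 'x pmf \<times> 'x) list set" where
  "comps_max T z = {c \<in> comps T z. \<not> (\<exists>d. d \<noteq> [] \<and> c @ d \<in> comps T z)}"

definition finite_proc :: "('s,'a) pts \<Rightarrow> 's \<Rightarrow> bool" where
  "finite_proc T s \<longleftrightarrow> (\<exists>N. \<forall>c \<in> comps T s. length c \<le> N)"

definition is_resolution ::
  "('s,'a) pts \<Rightarrow> 's \<Rightarrow> nat set \<Rightarrow> (nat,'a) pts \<Rightarrow> (nat \<Rightarrow> 's) \<Rightarrow> nat \<Rightarrow> bool" where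
  "is_resolution T s Z TZ corr z0 \<longleftrightarrow>
     z0 \<in> Z \<and> corr z0 = s \<and>
     (\<forall>(z,a,\<pi>)\<in>TZ. z \<in> Z \<and> set_pmf \<pi> \<subseteq> Z) \<and>
     (\<forall>(z,a,\<pi>)\<in>TZ. z0 \<notin> set_pmf \<pi>) \<and>
     (\<forall>z\<in>Z. z \<noteq> z0 \<longrightarrow> (\<exists>(z',a,\<pi>)\<in>TZ. z' \<noteq> z \<and> z \<in> set_pmf \<pi>)) \<and>
     (\<forall>(z,a,\<pi>)\<in>TZ. \<exists>\<pi>'. (corr z, a, \<pi>') \<in> T \<and> inj_on corr (set_pmf \<pi>) \<and>
                         (\<forall>z'\<in>set_pmf \<pi>. pmf \<pi> z' = pmf \<pi>' (corr z'))) \<and>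
     (\<forall>(z,a,\<pi>)\<in>TZ. \<forall>(z2,b,\<rho>)\<in>TZ. z = z2 \<longrightarrow> a = b \<and> \<pi> = \<rho>)"

definition trace_equiv :: "('s,'a) pts \<Rightarrow> 's \<Rightarrow> 's \<Rightarrow> bool" where
  "trace_equiv T s t \<longleftrightarrow>
    (\<forall>Z TZ corr z. is_resolution T s Z TZ corr z \<longrightarrow>
       (\<exists>Z' TZ' corr' z'. is_resolution T t Z' TZ' corr' z' \<and>
          (\<forall>\<alpha>. set_prob (comps_tr TZ z \<alpha>) = set_prob (comps_tr TZ' z' \<alpha>)))) \<and>
    (\<forall>Z TZ corr z. is_resolution T t Z TZ corr z \<longrightarrow>
       (\<exists>Z' TZ' corr' z'. is_resolution T s Z' TZ' corr' z' \<and>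
          (\<forall>\<alpha>. set_prob (comps_tr TZ z \<alpha>) = set_prob (comps_tr TZ' z' \<alpha>))))"

datatype 'a tform = TTop | Diam 'a "'a tform"

fun depth :: "'a tform \<Rightarrow> nat" where
  "depth TTop = 0"
| "depth (Diam a \<Phi>) = Suc (depth \<Phi>)"

fun comp_sat :: "('a \<times> 'x pmf \<times> 'x) list \<Rightarrow> 'a tform \<Rightarrow> bool" where
  "comp_sat c TTop = True"
| "comp_sat [] (Diam a \<Phi>) = False"
| "comp_sat ((b,\<pi>,z')#c) (Diam a \<Phi>) = (b = a \<and> comp_sat c \<Phi>)"

definition state_sat :: "('s,'a) pts \<Rightarrow> 's \<Rightarrow> 'a tform pmf \<Rightarrow> bool" where
  "state_sat T s \<Psi> \<longleftrightarrow>
    (\<exists>Z TZ corr z. is_resolution T s Z TZ corr z \<and>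
       (\<forall>\<Phi>\<in>set_pmf \<Psi>.
          set_prob {c \<in> comps_max TZ z. comp_sat c \<Phi> \<and> length c = depth \<Phi>} = pmf \<Psi> \<Phi>))"

definition Lsat :: "('s,'a) pts \<Rightarrow> 's \<Rightarrow> 'a tform pmf set" where
  "Lsat T s = {\<Psi>. finite (set_pmf \<Psi>) \<and> state_sat T s \<Psi>}"

definition dtf :: "'a tform \<Rightarrow> 'a tform \<Rightarrow> real" where
  "dtf \<Phi>1 \<Phi>2 = (if \<Phi>1 = \<Phi>2 then 0 else 1)"

definition is_coupling :: "('b \<times> 'b) pmf \<Rightarrow> 'b pmf \<Rightarrow> 'b pmf \<Rightarrow> bool" where
  "is_coupling \<omega> \<Psi>1 \<Psi>2 \<longleftrightarrow> map_pmf fst \<omega> = \<Psi>1 \<and> map_pmf snd \<omega> = \<Psi>2"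

(* Kantorovich lifting of d (the min is attained; we write Inf) *)
definition Dtdf :: "'a tform pmf \<Rightarrow> 'a tform pmf \<Rightarrow> real" where
  "Dtdf \<Psi>1 \<Psi>2 = Inf {(\<Sum>p\<in>set_pmf \<omega>. pmf \<omega> p * dtf (fst p) (snd p)) | \<omega>. is_coupling \<omega> \<Psi>1 \<Psi>2}"

definition inf1 :: "real set \<Rightarrow> real" where
  "inf1 R = (if R = {} then 1 else Inf R)"

definition sup0 :: "real set \<Rightarrow> real" where
  "sup0 R = (if R = {} then 0 else Sup R)"

definition hausdorff :: "('b \<Rightarrow> 'b \<Rightarrow> real) \<Rightarrow> 'b set \<Rightarrow> 'b set \<Rightarrow> real" where
  "hausdorff D X Y = max (sup0 ((\<lambda>x. inf1 ((\<lambda>y. D x y) ` Y)) ` X))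
                          (sup0 ((\<lambda>y. inf1 ((\<lambda>x. D y x) ` X)) ` Y))"

definition DL :: "('s,'a) pts \<Rightarrow> 's \<Rightarrow> 's \<Rightarrow> real" where
  "DL T s t = hausdorff Dtdf (Lsat T s) (Lsat T t)"

end

theory Submission
  imports Defs
begin

text \<open>
  Give each resolution \<open>Z\<close> of a finite process the trace distribution formula \<open>\<Psi>\<^sub>Z\<close>
  that assigns to the formula of a trace \<open>\<alpha>\<close> the probability of the maximal computations of
  \<open>Z\<close> with trace \<open>\<alpha>\<close>; \<open>Z\<close> satisfies \<open>\<Psi>\<^sub>Z\<close>, and any formula satisfied by \<open>Z\<close> is \<open>\<Psi>\<^sub>Z\<close>,
  since these probabilities sum to 1. In the deterministic, finite PTS \<open>Z\<close> the probability
  of \<open>C(z,\<alpha>)\<close> is that of the maximal computations with trace \<open>\<alpha>\<close> plus the sum over \<open>b\<close> of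
  that of \<open>C(z,\<alpha>b)\<close>, so the two families of probabilities determine each other. Hence every
  resolution of \<open>s\<close> is matched by one of \<open>t\<close> exactly when \<open>L(s) \<subseteq> L(t)\<close>, and trace
  equivalence means \<open>L(s) = L(t)\<close>.

  On the metric side, \<open>D(\<Psi>,\<Psi>') \<ge> |\<Psi>(\<Phi>) - \<Psi>'(\<Phi>)|\<close>, while by image-finiteness the values
  \<open>\<Psi>'(\<Phi>)\<close> for \<open>\<Psi>' \<in> L(t)\<close> are sums of subsets of the finitely many computation probabilities
  of \<open>t\<close> with trace \<open>\<Phi>\<close>. So a formula at distance 0 from \<open>L(t)\<close> already belongs to \<open>L(t)\<close>,
  and \<open>D\<^sub>L(s,t) = 0\<close> also means \<open>L(s) = L(t)\<close>.
\<close>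

section \<open>Computations and trace formulae\<close>

fun last_state :: "'x \<Rightarrow> ('a \<times> 'x pmf \<times> 'x) list \<Rightarrow> 'x" where
  "last_state z [] = z"
| "last_state z ((a,\<pi>,z')#c) = last_state z' c"

lemma is_comp_append:
  "is_comp T z (c @ d) \<longleftrightarrow> is_comp T z c \<and> is_comp T (last_state z c) d"
  by (induction T z c rule: is_comp.induct) auto

lemma comps_appendD: "c @ d \<in> comps T z \<Longrightarrow> c \<in> comps T z"
  by (simp add: comps_def is_comp_append)

lemma Nil_in_comps [simp]: "[] \<in> comps T z"
  by (simp add: comps_def)

lemma Cons_in_comps [simp]:
  "(a,\<pi>,y) # c \<in> comps T z \<longleftrightarrow> (z,a,\<pi>) \<in> T \<and> y \<in> set_pmf \<pi> \<and> c \<in> comps T y"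
  by (simp add: comps_def)

lemma comp_prob_Nil [simp]: "comp_prob [] = 1"
  by (simp add: comp_prob_def)

lemma comp_prob_Cons [simp]: "comp_prob ((a,\<pi>,y) # c) = pmf \<pi> y * comp_prob c"
  by (simp add: comp_prob_def)

lemma comp_prob_append: "comp_prob (c @ d) = comp_prob c * comp_prob d"
  by (simp add: comp_prob_def)

lemma comp_prob_nonneg: "0 \<le> comp_prob c"
  unfolding comp_prob_def by (induction c) (auto split: prod.splits)

lemma set_prob_empty [simp]: "set_prob {} = 0"
  by (simp add: set_prob_def)

lemma set_prob_nonneg: "0 \<le> set_prob C"
  unfolding set_prob_def by (rule sum_nonneg) (rule comp_prob_nonneg)

lemma trace_of_simps [simp]:
  "trace_of [] = []"
  "trace_of (x # c) = fst x # trace_of c"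
  "trace_of (c @ d) = trace_of c @ trace_of d"
  "length (trace_of c) = length c"
  by (simp_all add: trace_of_def)

lemma comps_tr_Nil: "comps_tr T z [] = {[]}"
  by (auto simp: comps_tr_def trace_of_def)

lemma comps_tr_Cons:
  "comps_tr T z (a # \<alpha>) =
     (\<Union>\<pi>\<in>{\<pi>. (z,a,\<pi>) \<in> T}. \<Union>y\<in>set_pmf \<pi>. Cons (a,\<pi>,y) ` comps_tr T y \<alpha>)"
proof (intro equalityI subsetI)
  fix c assume "c \<in> comps_tr T z (a # \<alpha>)"
  then obtain \<pi> y c' where "c = (a,\<pi>,y) # c'" "(z,a,\<pi>) \<in> T" "y \<in> set_pmf \<pi>" "c' \<in> comps_tr T y \<alpha>"
    by (cases c) (auto simp: comps_tr_def)
  then show "c \<in> (\<Union>\<pi>\<in>{\<pi>. (z,a,\<pi>) \<in> T}. \<Union>y\<in>set_pmf \<pi>. Cons (a,\<pi>,y) ` comps_tr T y \<alpha>)"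
    by blast
qed (auto simp: comps_tr_def)

lemma comps_tr_snocD:
  assumes "c \<in> comps_tr T z (\<alpha> @ [b])"
  shows "b \<in> (\<lambda>c. fst (last c)) ` comps T z"
proof (rule image_eqI)
  from assms show "b = fst (last c)" by (cases c rule: rev_cases) (auto simp: comps_tr_def)
  from assms show "c \<in> comps T z" by (simp add: comps_tr_def)
qed

lemma finite_comps_tr:
  assumes "pts_ok T"
  shows "finite (comps_tr T z \<alpha>)"
proof (induction \<alpha> arbitrary: z)
  case (Cons a \<alpha>)
  then show ?case
    using assms by (auto simp: comps_tr_Cons pts_ok_def)
qed (simp add: comps_tr_Nil)

fun formula_trace :: "'a tform \<Rightarrow> 'a list" where
  "formula_trace TTop = []"
| "formula_trace (Diam a \<Phi>) = a # formula_trace \<Phi>"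

fun trace_formula :: "'a list \<Rightarrow> 'a tform" where
  "trace_formula [] = TTop"
| "trace_formula (a # \<alpha>) = Diam a (trace_formula \<alpha>)"

lemma formula_trace_trace_formula [simp]: "formula_trace (trace_formula \<alpha>) = \<alpha>"
  by (induction \<alpha>) auto

lemma trace_formula_formula_trace [simp]: "trace_formula (formula_trace \<Phi>) = \<Phi>"
  by (induction \<Phi>) auto

lemma formula_trace_inject [simp]: "formula_trace \<Phi> = formula_trace \<Phi>' \<longleftrightarrow> \<Phi> = \<Phi>'"
  by (metis trace_formula_formula_trace)

lemma comp_sat_depth_iff: "comp_sat c \<Phi> \<and> length c = depth \<Phi> \<longleftrightarrow> trace_of c = formula_trace \<Phi>"
proof (induction c arbitrary: \<Phi>)
  case Nil
  then show ?case by (cases \<Phi>) auto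
next
  case (Cons x c)
  then show ?case by (cases \<Phi>; cases x) auto
qed

definition max_comps_tr :: "('x,'a) pts \<Rightarrow> 'x \<Rightarrow> 'a list \<Rightarrow> ('a \<times> 'x pmf \<times> 'x) list set" where
  "max_comps_tr T z \<alpha> = {c \<in> comps_max T z. trace_of c = \<alpha>}"

lemma state_sat_iff_max_comps_tr:
  "state_sat T s \<Psi> \<longleftrightarrow> (\<exists>Z TZ corr z. is_resolution T s Z TZ corr z \<and>
     (\<forall>\<Phi>\<in>set_pmf \<Psi>. set_prob (max_comps_tr TZ z (formula_trace \<Phi>)) = pmf \<Psi> \<Phi>))"
  unfolding state_sat_def max_comps_tr_def comp_sat_depth_iff ..

definition extensions ::
  "('x,'a) pts \<Rightarrow> 'x \<Rightarrow> ('a \<times> 'x pmf \<times> 'x) list \<Rightarrow> ('a \<times> 'x pmf \<times> 'x) list set" where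
  "extensions T z c = {e \<in> comps T z. \<exists>x. e = c @ [x]}"

definition max_extensions ::
  "('x,'a) pts \<Rightarrow> 'x \<Rightarrow> ('a \<times> 'x pmf \<times> 'x) list \<Rightarrow> ('a \<times> 'x pmf \<times> 'x) list set" where
  "max_extensions T z c = {c' \<in> comps_max T z. \<exists>d. c' = c @ d}"

lemma extensions_of_max: "c \<in> comps_max T z \<Longrightarrow> extensions T z c = {}"
  by (auto simp: extensions_def comps_max_def)

lemma extensions_disjoint: "c1 \<noteq> c2 \<Longrightarrow> extensions T z c1 \<inter> extensions T z c2 = {}"
  by (auto simp: extensions_def)

lemma UN_extensions_comps_tr:
  "(\<Union>c\<in>comps_tr T z \<alpha>. extensions T z c) = (\<Union>b. comps_tr T z (\<alpha> @ [b]))"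
proof (intro equalityI subsetI)
  fix e assume "e \<in> (\<Union>b. comps_tr T z (\<alpha> @ [b]))"
  then obtain c x where "e = c @ [x]" "e \<in> comps T z" "trace_of c = \<alpha>"
    by (cases e rule: rev_cases) (auto simp: comps_tr_def)
  then show "e \<in> (\<Union>c\<in>comps_tr T z \<alpha>. extensions T z c)"
    unfolding comps_tr_def extensions_def by (blast dest: comps_appendD)
qed (auto simp: comps_tr_def extensions_def)

lemma max_extensions_of_max: "c \<in> comps_max T z \<Longrightarrow> max_extensions T z c = {c}"
  by (auto simp: max_extensions_def comps_max_def)

lemma max_extensions_of_non_max:
  assumes "c \<notin> comps_max T z"
  shows "max_extensions T z c = (\<Union>e\<in>extensions T z c. max_extensions T z e)"
proof (intro equalityI subsetI)
  fix c' assume "c' \<in> max_extensions T z c"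
  then obtain d where c': "c' = c @ d" "c' \<in> comps_max T z" by (auto simp: max_extensions_def)
  with assms obtain x d' where "d = x # d'" by (cases d) auto
  with c' have "c @ [x] \<in> comps T z"
    using comps_appendD[of "c @ [x]" d'] by (simp add: comps_max_def)
  then have "c @ [x] \<in> extensions T z c" unfolding extensions_def by blast
  moreover have "c' \<in> max_extensions T z (c @ [x])"
    using c' \<open>d = x # d'\<close> unfolding max_extensions_def by simp
  ultimately show "c' \<in> (\<Union>e\<in>extensions T z c. max_extensions T z e)" by blast
qed (auto simp: extensions_def max_extensions_def)

lemma max_extensions_disjoint:
  assumes "e1 \<in> extensions T z c" "e2 \<in> extensions T z c" "e1 \<noteq> e2"
  shows "max_extensions T z e1 \<inter> max_extensions T z e2 = {}"
  using assms by (auto simp: extensions_def max_extensions_def)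

section \<open>Deterministic PTSs\<close>

locale det_pts =
  fixes TZ :: "('x,'a) pts"
  assumes deterministic: "(z,a,\<pi>) \<in> TZ \<Longrightarrow> (z,b,\<rho>) \<in> TZ \<Longrightarrow> a = b \<and> \<pi> = \<rho>"
    and finite_support: "(z,a,\<pi>) \<in> TZ \<Longrightarrow> finite (set_pmf \<pi>)"
begin

lemma finite_transitions_from: "finite {(a,\<pi>). (z,a,\<pi>) \<in> TZ}"
proof (cases "\<exists>a \<pi>. (z,a,\<pi>) \<in> TZ")
  case True
  then obtain a0 \<pi>0 where "(z,a0,\<pi>0) \<in> TZ" by blast
  then have "{(a,\<pi>). (z,a,\<pi>) \<in> TZ} \<subseteq> {(a0,\<pi>0)}" using deterministic by blast
  then show ?thesis by (rule finite_subset) simp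
qed simp

lemma pts_ok_TZ: "pts_ok TZ"
proof -
  have "{\<pi>. (z,a,\<pi>) \<in> TZ} \<subseteq> snd ` {(a,\<pi>). (z,a,\<pi>) \<in> TZ}" for z a by force
  then have "finite {\<pi>. (z,a,\<pi>) \<in> TZ}" for z a
    using finite_transitions_from by (meson finite_imageI finite_subset)
  with finite_support show ?thesis unfolding pts_ok_def by auto
qed

lemma finite_comps_upto: "finite {c \<in> comps TZ z. length c \<le> n}"
proof (induction n arbitrary: z)
  case 0
  have "{c \<in> comps TZ z. length c \<le> 0} = {[]}" by auto
  then show ?case by simp
next
  case (Suc n)
  let ?next = "\<lambda>p. \<Union>y\<in>set_pmf (snd p). Cons (fst p, snd p, y) ` {c \<in> comps TZ y. length c \<le> n}"
  have "{c \<in> comps TZ z. length c \<le> Suc n} \<subseteq> insert [] (\<Union>p\<in>{(a,\<pi>). (z,a,\<pi>) \<in> TZ}. ?next p)"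
  proof
    fix c assume c: "c \<in> {c \<in> comps TZ z. length c \<le> Suc n}"
    show "c \<in> insert [] (\<Union>p\<in>{(a,\<pi>). (z,a,\<pi>) \<in> TZ}. ?next p)"
    proof (cases c)
      case (Cons x c')
      then obtain a \<pi> y where "c = (a,\<pi>,y) # c'" by (cases x) auto
      with c show ?thesis by force
    qed simp
  qed
  moreover have "finite (?next p)" if "p \<in> {(a,\<pi>). (z,a,\<pi>) \<in> TZ}" for p
    using that finite_support Suc.IH by (cases p) auto
  ultimately show ?case
    using finite_transitions_from by (meson finite_UN_I finite_insert finite_subset)
qed

lemma finite_comps:
  assumes "finite_proc TZ z"
  shows "finite (comps TZ z)"
proof -
  obtain N where "\<forall>c\<in>comps TZ z. length c \<le> N" using assms by (auto simp: finite_proc_def)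
  then have "comps TZ z \<subseteq> {c \<in> comps TZ z. length c \<le> N}" by blast
  then show ?thesis by (rule finite_subset[OF _ finite_comps_upto])
qed

lemma finite_comps_max: "finite_proc TZ z \<Longrightarrow> finite (comps_max TZ z)"
  by (rule finite_subset[OF _ finite_comps]) (auto simp: comps_max_def)

lemma extensions_of_non_max:
  assumes "c \<in> comps TZ z" and "c \<notin> comps_max TZ z"
  obtains a \<pi> where "(last_state z c, a, \<pi>) \<in> TZ"
    and "extensions TZ z c = (\<lambda>y. c @ [(a,\<pi>,y)]) ` set_pmf \<pi>"
proof -
  obtain d where "d \<noteq> []" "c @ d \<in> comps TZ z" using assms by (auto simp: comps_max_def)
  then obtain a \<pi> where step: "(last_state z c, a, \<pi>) \<in> TZ"
    by (cases d) (auto simp: comps_def is_comp_append)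
  have "extensions TZ z c = (\<lambda>y. c @ [(a,\<pi>,y)]) ` set_pmf \<pi>"
  proof (intro equalityI subsetI)
    fix e assume "e \<in> extensions TZ z c"
    then obtain b \<rho> y where e: "e = c @ [(b,\<rho>,y)]" "(last_state z c, b, \<rho>) \<in> TZ" "y \<in> set_pmf \<rho>"
      by (auto simp: extensions_def comps_def is_comp_append)
    with step deterministic have "b = a" "\<rho> = \<pi>" by blast+
    with e show "e \<in> (\<lambda>y. c @ [(a,\<pi>,y)]) ` set_pmf \<pi>" by blast
  qed (use assms step in \<open>auto simp: extensions_def comps_def is_comp_append\<close>)
  with step show ?thesis by (rule that)
qed

lemma finite_extensions: "finite (extensions TZ z c)"
proof (cases "c \<in> comps TZ z \<and> c \<notin> comps_max TZ z")
  case True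
  then have "c \<in> comps TZ z" "c \<notin> comps_max TZ z" by simp_all
  then obtain a \<pi> where step: "(last_state z c, a, \<pi>) \<in> TZ"
    and ext: "extensions TZ z c = (\<lambda>y. c @ [(a,\<pi>,y)]) ` set_pmf \<pi>"
    by (rule extensions_of_non_max)
  show ?thesis using finite_support[OF step] by (simp add: ext)
next
  case False
  have "extensions TZ z c = {}"
  proof (cases "c \<in> comps TZ z")
    case True
    with False show ?thesis by (simp add: extensions_of_max)
  next
    case False
    then show ?thesis unfolding extensions_def by (blast dest: comps_appendD)
  qed
  then show ?thesis by simp
qed

lemma set_prob_extensions:
  assumes "c \<in> comps TZ z" and "c \<notin> comps_max TZ z"
  shows "set_prob (extensions TZ z c) = comp_prob c"
proof -
  obtain a \<pi> where step: "(last_state z c, a, \<pi>) \<in> TZ"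
    and ext: "extensions TZ z c = (\<lambda>y. c @ [(a,\<pi>,y)]) ` set_pmf \<pi>"
    using assms by (rule extensions_of_non_max)
  have "inj_on (\<lambda>y. c @ [(a,\<pi>,y)]) (set_pmf \<pi>)" by (simp add: inj_on_def)
  then have "set_prob (extensions TZ z c) = (\<Sum>y\<in>set_pmf \<pi>. comp_prob (c @ [(a,\<pi>,y)]))"
    by (simp add: set_prob_def ext sum.reindex)
  also have "\<dots> = (\<Sum>y\<in>set_pmf \<pi>. comp_prob c * pmf \<pi> y)"
    by (simp add: comp_prob_append)
  also have "\<dots> = comp_prob c"
    using sum_pmf_eq_1[OF finite_support[OF step] order_refl] by (simp add: sum_distrib_left[symmetric])
  finally show ?thesis .
qed

lemma set_prob_comps_tr_split:
  assumes "finite B" and "\<And>b. b \<notin> B \<Longrightarrow> comps_tr TZ z (\<alpha> @ [b]) = {}"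
  shows "set_prob (comps_tr TZ z \<alpha>) =
           set_prob (max_comps_tr TZ z \<alpha>) + (\<Sum>b\<in>B. set_prob (comps_tr TZ z (\<alpha> @ [b])))"
proof -
  let ?C = "comps_tr TZ z \<alpha>"
  let ?N = "?C - max_comps_tr TZ z \<alpha>"
  have fin: "finite ?C" by (rule finite_comps_tr[OF pts_ok_TZ])
  have "max_comps_tr TZ z \<alpha> \<subseteq> ?C"
    unfolding max_comps_tr_def comps_tr_def comps_max_def by blast
  then have "set_prob ?C = set_prob ?N + set_prob (max_comps_tr TZ z \<alpha>)"
    unfolding set_prob_def using fin by (rule sum.subset_diff)
  also have "set_prob ?N = (\<Sum>c\<in>?N. set_prob (extensions TZ z c))"
    unfolding set_prob_def[of ?N]
    by (rule sum.cong) (auto simp: set_prob_extensions comps_tr_def max_comps_tr_def)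
  also have "\<dots> = (\<Sum>c\<in>?C. set_prob (extensions TZ z c))"
    by (rule sum.mono_neutral_left[OF fin])
      (auto simp: extensions_of_max comps_tr_def max_comps_tr_def)
  also have "\<dots> = set_prob (\<Union>c\<in>?C. extensions TZ z c)"
    unfolding set_prob_def
    by (rule sum.UNION_disjoint[OF fin, symmetric]) (simp_all add: finite_extensions extensions_disjoint)
  also have "(\<Union>c\<in>?C. extensions TZ z c) = (\<Union>b. comps_tr TZ z (\<alpha> @ [b]))"
    by (rule UN_extensions_comps_tr)
  also have "\<dots> = (\<Union>b\<in>B. comps_tr TZ z (\<alpha> @ [b]))"
    using assms(2) by auto
  also have "set_prob \<dots> = (\<Sum>b\<in>B. set_prob (comps_tr TZ z (\<alpha> @ [b])))"
    unfolding set_prob_def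
  proof (rule sum.UNION_disjoint[OF assms(1)])
    show "\<forall>b\<in>B. finite (comps_tr TZ z (\<alpha> @ [b]))"
      using finite_comps_tr[OF pts_ok_TZ] by blast
    show "\<forall>b1\<in>B. \<forall>b2\<in>B. b1 \<noteq> b2 \<longrightarrow> comps_tr TZ z (\<alpha> @ [b1]) \<inter> comps_tr TZ z (\<alpha> @ [b2]) = {}"
      by (auto simp: comps_tr_def)
  qed
  finally show ?thesis by simp
qed

lemma comp_prob_eq_max_extensions:
  assumes "finite_proc TZ z" and "c \<in> comps TZ z"
  shows "comp_prob c = set_prob (max_extensions TZ z c)"
proof -
  obtain N where bound: "\<forall>c\<in>comps TZ z. length c \<le> N"
    using assms(1) by (auto simp: finite_proc_def)
  have fin: "finite (max_extensions TZ z e)" for e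
    by (rule finite_subset[OF _ finite_comps_max[OF assms(1)]]) (auto simp: max_extensions_def)
  show ?thesis using assms(2)
  proof (induction "N - length c" arbitrary: c rule: less_induct)
    case less
    show ?case
    proof (cases "c \<in> comps_max TZ z")
      case True
      then show ?thesis by (simp add: max_extensions_of_max set_prob_def)
    next
      case False
      have IH: "set_prob (max_extensions TZ z e) = comp_prob e" if "e \<in> extensions TZ z c" for e
      proof -
        from that obtain x where e: "e = c @ [x]" "e \<in> comps TZ z" by (auto simp: extensions_def)
        have "length e \<le> N" using bound e(2) by blast
        with e(1) have "N - length e < N - length c" by simp
        from less.hyps[OF this e(2)] show ?thesis by simp
      qed
      have "set_prob (max_extensions TZ z c) = (\<Sum>e\<in>extensions TZ z c. set_prob (max_extensions TZ z e))"
        unfolding max_extensions_of_non_max[OF False] set_prob_def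
        by (rule sum.UNION_disjoint[OF finite_extensions]) (simp_all add: fin max_extensions_disjoint)
      also have "\<dots> = (\<Sum>e\<in>extensions TZ z c. comp_prob e)"
        using IH by (rule sum.cong[OF refl])
      also have "\<dots> = comp_prob c"
        using set_prob_extensions[OF less.prems False] by (simp add: set_prob_def)
      finally show ?thesis by simp
    qed
  qed
qed

lemma set_prob_comps_max: "finite_proc TZ z \<Longrightarrow> set_prob (comps_max TZ z) = 1"
  using comp_prob_eq_max_extensions[of z "[]"] by (simp add: max_extensions_def)

lemma sum_max_comps_tr_le_1:
  assumes "finite_proc TZ z" and "finite F"
  shows "(\<Sum>\<Phi>\<in>F. set_prob (max_comps_tr TZ z (formula_trace \<Phi>))) \<le> 1"
proof -
  have fin: "finite (comps_max TZ z)" by (rule finite_comps_max[OF assms(1)])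
  have "(\<Sum>\<Phi>\<in>F. set_prob (max_comps_tr TZ z (formula_trace \<Phi>)))
          = set_prob (\<Union>\<Phi>\<in>F. max_comps_tr TZ z (formula_trace \<Phi>))"
    unfolding set_prob_def
  proof (rule sum.UNION_disjoint[OF assms(2), symmetric])
    show "\<forall>\<Phi>\<in>F. finite (max_comps_tr TZ z (formula_trace \<Phi>))"
      using fin by (auto simp: max_comps_tr_def)
    show "\<forall>\<Phi>\<in>F. \<forall>\<Phi>'\<in>F. \<Phi> \<noteq> \<Phi>' \<longrightarrow>
            max_comps_tr TZ z (formula_trace \<Phi>) \<inter> max_comps_tr TZ z (formula_trace \<Phi>') = {}"
      by (auto simp: max_comps_tr_def)
  qed
  also have "\<dots> \<le> set_prob (comps_max TZ z)"
    unfolding set_prob_def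
    by (rule sum_mono2[OF fin]) (auto simp: max_comps_tr_def comp_prob_nonneg)
  also have "\<dots> = 1" by (rule set_prob_comps_max[OF assms(1)])
  finally show ?thesis .
qed

lemma sum_max_comps_tr_eq_1:
  assumes "finite_proc TZ z"
  shows "(\<Sum>\<Phi>\<in>(\<lambda>c. trace_formula (trace_of c)) ` comps_max TZ z.
            set_prob (max_comps_tr TZ z (formula_trace \<Phi>))) = 1"
proof -
  have by_trace: "{c \<in> comps_max TZ z. trace_formula (trace_of c) = \<Phi>} = max_comps_tr TZ z (formula_trace \<Phi>)"
    for \<Phi> by (auto simp: max_comps_tr_def)
  have "set_prob (comps_max TZ z) = (\<Sum>\<Phi>\<in>(\<lambda>c. trace_formula (trace_of c)) ` comps_max TZ z.
          set_prob {c \<in> comps_max TZ z. trace_formula (trace_of c) = \<Phi>})"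
    unfolding set_prob_def by (rule sum.image_gen[OF finite_comps_max[OF assms]])
  then show ?thesis using set_prob_comps_max[OF assms] by (simp add: by_trace)
qed

lemma ex_max_trace_distribution:
  assumes "finite_proc TZ z"
  obtains \<Psi> where "finite (set_pmf \<Psi>)"
    and "\<And>\<Phi>. pmf \<Psi> \<Phi> = set_prob (max_comps_tr TZ z (formula_trace \<Phi>))"
proof -
  define g where "g \<Phi> = set_prob (max_comps_tr TZ z (formula_trace \<Phi>))" for \<Phi>
  define A where "A = (\<lambda>c. trace_formula (trace_of c)) ` comps_max TZ z"
  have fin: "finite A" unfolding A_def using finite_comps_max[OF assms] by simp
  have outside: "g \<Phi> = 0" if "\<Phi> \<notin> A" for \<Phi>
  proof -
    have "max_comps_tr TZ z (formula_trace \<Phi>) = {}"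
      using that unfolding A_def max_comps_tr_def by force
    then show ?thesis by (simp add: g_def)
  qed
  have "(\<integral>\<^sup>+\<Phi>. ennreal (g \<Phi>) \<partial>count_space UNIV) = (\<Sum>\<Phi>\<in>A. ennreal (g \<Phi>))"
    by (rule nn_integral_count_space'[OF fin]) (simp_all add: outside)
  also have "\<dots> = 1"
    using sum_max_comps_tr_eq_1[OF assms]
    by (simp add: sum_ennreal[symmetric] g_def A_def set_prob_nonneg)
  finally have pmf_g: "pmf (embed_pmf g) \<Phi> = g \<Phi>" for \<Phi>
    by (intro pmf_embed_pmf) (simp_all add: g_def set_prob_nonneg)
  have "set_pmf (embed_pmf g) \<subseteq> A"
    using outside by (metis pmf_g set_pmf_iff subsetI)
  with fin have "finite (set_pmf (embed_pmf g))" by (rule finite_subset[rotated])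
  from that[OF this] pmf_g show ?thesis unfolding g_def by blast
qed

lemma pmf_eq_max_comps_tr:
  assumes "finite_proc TZ z" and "finite (set_pmf \<Psi>)"
    and sat: "\<forall>\<Phi>\<in>set_pmf \<Psi>. set_prob (max_comps_tr TZ z (formula_trace \<Phi>)) = pmf \<Psi> \<Phi>"
  shows "pmf \<Psi> \<Phi> = set_prob (max_comps_tr TZ z (formula_trace \<Phi>))"
proof (cases "\<Phi> \<in> set_pmf \<Psi>")
  case False
  have "set_prob (max_comps_tr TZ z (formula_trace \<Phi>)) + 1
          = (\<Sum>\<Phi>'\<in>insert \<Phi> (set_pmf \<Psi>). set_prob (max_comps_tr TZ z (formula_trace \<Phi>')))"
    using assms(2) False sat sum_pmf_eq_1[OF assms(2) order_refl] by simp
  also have "\<dots> \<le> 1" by (rule sum_max_comps_tr_le_1) (simp_all add: assms)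
  finally show ?thesis
    using False set_prob_nonneg[of "max_comps_tr TZ z (formula_trace \<Phi>)"]
    by (simp add: set_pmf_iff)
qed (use sat in simp)

end

lemma set_prob_comps_tr_split_pair:
  fixes TZ TZ' :: "('x,'a) pts"
  assumes "det_pts TZ" and "det_pts TZ'" and "finite_proc TZ z" and "finite_proc TZ' z'"
  obtains B where
    "\<And>\<alpha>. set_prob (comps_tr TZ z \<alpha>) =
            set_prob (max_comps_tr TZ z \<alpha>) + (\<Sum>b\<in>B. set_prob (comps_tr TZ z (\<alpha> @ [b])))"
    "\<And>\<alpha>. set_prob (comps_tr TZ' z' \<alpha>) =
            set_prob (max_comps_tr TZ' z' \<alpha>) + (\<Sum>b\<in>B. set_prob (comps_tr TZ' z' (\<alpha> @ [b])))"
proof -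
  interpret D: det_pts TZ by fact
  interpret D': det_pts TZ' by fact
  define B where "B = (\<lambda>c. fst (last c)) ` (comps TZ z \<union> comps TZ' z')"
  have fin: "finite B" unfolding B_def using D.finite_comps D'.finite_comps assms(3,4) by simp
  have no_ext: "comps_tr TZ z (\<alpha> @ [b]) = {}" "comps_tr TZ' z' (\<alpha> @ [b]) = {}" if "b \<notin> B" for \<alpha> b
    using that unfolding B_def by (auto dest!: comps_tr_snocD)
  show ?thesis
    by (rule that[OF D.set_prob_comps_tr_split[OF fin no_ext(1)] D'.set_prob_comps_tr_split[OF fin no_ext(2)]])
qed

lemma comps_tr_probs_eq_iff_max_comps_tr_probs_eq:
  fixes TZ TZ' :: "('x,'a) pts"
  assumes "det_pts TZ" and "det_pts TZ'" and "finite_proc TZ z" and "finite_proc TZ' z'"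
  shows "(\<forall>\<alpha>. set_prob (comps_tr TZ z \<alpha>) = set_prob (comps_tr TZ' z' \<alpha>)) \<longleftrightarrow>
         (\<forall>\<alpha>. set_prob (max_comps_tr TZ z \<alpha>) = set_prob (max_comps_tr TZ' z' \<alpha>))"
proof -
  obtain B where split:
    "\<And>\<alpha>. set_prob (comps_tr TZ z \<alpha>) =
            set_prob (max_comps_tr TZ z \<alpha>) + (\<Sum>b\<in>B. set_prob (comps_tr TZ z (\<alpha> @ [b])))"
    "\<And>\<alpha>. set_prob (comps_tr TZ' z' \<alpha>) =
            set_prob (max_comps_tr TZ' z' \<alpha>) + (\<Sum>b\<in>B. set_prob (comps_tr TZ' z' (\<alpha> @ [b])))"
    using set_prob_comps_tr_split_pair[OF assms] by blast
  obtain N1 N2 where "\<forall>c\<in>comps TZ z. length c \<le> N1" "\<forall>c\<in>comps TZ' z'. length c \<le> N2"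
    using assms(3,4) unfolding finite_proc_def by blast
  then have bound: "\<forall>c\<in>comps TZ z. length c \<le> max N1 N2" "\<forall>c\<in>comps TZ' z'. length c \<le> max N1 N2"
    by (auto simp: le_max_iff_disj)
  show ?thesis
  proof (intro iffI allI)
    fix \<alpha> assume C_eq: "\<forall>\<alpha>. set_prob (comps_tr TZ z \<alpha>) = set_prob (comps_tr TZ' z' \<alpha>)"
    have "(\<Sum>b\<in>B. set_prob (comps_tr TZ z (\<alpha> @ [b]))) = (\<Sum>b\<in>B. set_prob (comps_tr TZ' z' (\<alpha> @ [b])))"
      using C_eq by simp
    with split(1)[of \<alpha>] split(2)[of \<alpha>] C_eq[rule_format, of \<alpha>]
    show "set_prob (max_comps_tr TZ z \<alpha>) = set_prob (max_comps_tr TZ' z' \<alpha>)" by linarith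
  next
    fix \<alpha> assume max_eq: "\<forall>\<alpha>. set_prob (max_comps_tr TZ z \<alpha>) = set_prob (max_comps_tr TZ' z' \<alpha>)"
    \<comment> \<open>downward induction on the length of \<open>\<alpha>\<close>; beyond the length bound both sides vanish\<close>
    show "set_prob (comps_tr TZ z \<alpha>) = set_prob (comps_tr TZ' z' \<alpha>)"
    proof (induction "Suc (max N1 N2) - length \<alpha>" arbitrary: \<alpha> rule: less_induct)
      case less
      show ?case
      proof (cases "length \<alpha> \<le> max N1 N2")
        case True
        have "set_prob (comps_tr TZ z (\<alpha> @ [b])) = set_prob (comps_tr TZ' z' (\<alpha> @ [b]))" for b
          using True by (intro less.hyps) simp
        with max_eq show ?thesis by (simp add: split(1)[of \<alpha>] split(2)[of \<alpha>])
      next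
        case False
        with bound have "comps_tr TZ z \<alpha> = {}" "comps_tr TZ' z' \<alpha> = {}"
          unfolding comps_tr_def by fastforce+
        then show ?thesis by simp
      qed
    qed
  qed
qed

section \<open>Resolutions and the trace distribution formulae they satisfy\<close>

lemma pmf_eq_if_agree_on_set_pmf:
  assumes "finite (set_pmf p)" and "\<And>x. x \<in> set_pmf p \<Longrightarrow> pmf q x = pmf p x"
  shows "p = q"
proof (rule pmf_eqI)
  fix x
  show "pmf p x = pmf q x"
  proof (cases "x \<in> set_pmf p")
    case False
    have "pmf q x + 1 = measure q (insert x (set_pmf p))"
      using assms False sum_pmf_eq_1[OF assms(1) order_refl]
      by (simp add: measure_measure_pmf_finite)
    also have "\<dots> \<le> 1" by (rule measure_pmf.prob_le_1)
    finally show ?thesis using False by (simp add: set_pmf_iff)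
  qed (simp add: assms(2))
qed

locale resolution =
  fixes T :: "('s,'a) pts" and s :: 's and Z :: "nat set" and TZ :: "(nat,'a) pts"
    and corr :: "nat \<Rightarrow> 's" and z0 :: nat
  assumes res: "is_resolution T s Z TZ corr z0" and pts_ok_T: "pts_ok T"
begin

lemma corr_z0: "corr z0 = s"
  using res by (simp add: is_resolution_def)

lemma transition_corr:
  assumes "(z,a,\<pi>) \<in> TZ"
  shows "(corr z, a, map_pmf corr \<pi>) \<in> T" and "inj_on corr (set_pmf \<pi>)" and "finite (set_pmf \<pi>)"
proof -
  obtain \<pi>' where \<pi>': "(corr z, a, \<pi>') \<in> T" "inj_on corr (set_pmf \<pi>)"
      "\<forall>y\<in>set_pmf \<pi>. pmf \<pi> y = pmf \<pi>' (corr y)"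
    using res assms unfolding is_resolution_def by fast
  show "inj_on corr (set_pmf \<pi>)" by (rule \<pi>'(2))
  have "corr ` set_pmf \<pi> \<subseteq> set_pmf \<pi>'"
    using \<pi>'(3) by (auto simp: set_pmf_iff)
  moreover have "finite (set_pmf \<pi>')" using pts_ok_T \<pi>'(1) unfolding pts_ok_def by blast
  ultimately show fin: "finite (set_pmf \<pi>)"
    using \<pi>'(2) by (metis finite_imageD finite_subset)
  \<comment> \<open>\<open>\<pi>'\<close> is only pinned down on \<open>corr ` set_pmf \<pi>\<close>, which already carries mass 1\<close>
  have "map_pmf corr \<pi> = \<pi>'"
  proof (rule pmf_eq_if_agree_on_set_pmf)
    show "finite (set_pmf (map_pmf corr \<pi>))" using fin by simp
    fix x assume "x \<in> set_pmf (map_pmf corr \<pi>)"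
    then obtain y where "y \<in> set_pmf \<pi>" "x = corr y" by auto
    with \<pi>' show "pmf \<pi>' x = pmf (map_pmf corr \<pi>) x" by (simp add: pmf_map_inj)
  qed
  with \<pi>'(1) show "(corr z, a, map_pmf corr \<pi>) \<in> T" by simp
qed

sublocale det_pts TZ
proof
  show "(z,a,\<pi>) \<in> TZ \<Longrightarrow> (z,b,\<rho>) \<in> TZ \<Longrightarrow> a = b \<and> \<pi> = \<rho>" for z a \<pi> b \<rho>
    using res unfolding is_resolution_def by fast
qed (rule transition_corr(3))

definition comp_corr :: "('a \<times> nat pmf \<times> nat) list \<Rightarrow> ('a \<times> 's pmf \<times> 's) list" where
  "comp_corr = map (\<lambda>(a,\<pi>,y). (a, map_pmf corr \<pi>, corr y))"

lemma comp_corr_simps [simp]: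
  "comp_corr [] = []"
  "comp_corr ((a,\<pi>,y) # c) = (a, map_pmf corr \<pi>, corr y) # comp_corr c"
  "trace_of (comp_corr c) = trace_of c"
  "length (comp_corr c) = length c"
  by (simp_all add: comp_corr_def trace_of_def case_prod_beta)

lemma comp_corr_in_comps:
  "c \<in> comps TZ z \<Longrightarrow> comp_corr c \<in> comps T (corr z) \<and> comp_prob (comp_corr c) = comp_prob c"
proof (induction c arbitrary: z)
  case (Cons x c)
  obtain a \<pi> y where x: "x = (a,\<pi>,y)" by (cases x)
  with Cons.prems have "(z,a,\<pi>) \<in> TZ" "y \<in> set_pmf \<pi>" "c \<in> comps TZ y" by auto
  with Cons.IH x show ?case by (simp add: transition_corr pmf_map_inj)
qed simp

lemma inj_on_comp_corr: "inj_on comp_corr (comps TZ z)"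
proof (rule inj_onI)
  fix c1 c2 assume "c1 \<in> comps TZ z" "c2 \<in> comps TZ z" "comp_corr c1 = comp_corr c2"
  then show "c1 = c2"
  proof (induction c1 arbitrary: z c2)
    case (Cons x c1)
    obtain a \<pi> y where x: "x = (a,\<pi>,y)" by (cases x)
    from Cons.prems x obtain b \<rho> y' c2' where c2: "c2 = (b,\<rho>,y') # c2'"
      by (cases c2) (auto simp: comp_corr_def)
    from Cons.prems x c2 have "(z,a,\<pi>) \<in> TZ" "(z,b,\<rho>) \<in> TZ" "y \<in> set_pmf \<pi>" "y' \<in> set_pmf \<rho>"
      by auto
    then have "b = a" "\<rho> = \<pi>" "corr y = corr y' \<Longrightarrow> y = y'"
      using deterministic transition_corr(2) by (blast, blast, metis inj_onD)
    with Cons x c2 show ?case by auto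
  qed (simp add: comp_corr_def)
qed

lemma finite_proc_TZ: "finite_proc T s \<Longrightarrow> finite_proc TZ z0"
  unfolding finite_proc_def using comp_corr_in_comps corr_z0 by (metis comp_corr_simps(4))

lemma set_prob_max_comps_tr_in_subset_sums:
  "set_prob (max_comps_tr TZ z0 \<alpha>) \<in> sum comp_prob ` Pow (comps_tr T s \<alpha>)"
proof
  let ?H = "max_comps_tr TZ z0 \<alpha>"
  have H: "?H \<subseteq> comps TZ z0" by (auto simp: max_comps_tr_def comps_max_def)
  then show "comp_corr ` ?H \<in> Pow (comps_tr T s \<alpha>)"
    using comp_corr_in_comps corr_z0 by (auto simp: comps_tr_def max_comps_tr_def)
  have "sum comp_prob (comp_corr ` ?H) = sum (comp_prob \<circ> comp_corr) ?H"
    using H by (intro sum.reindex inj_on_subset[OF inj_on_comp_corr])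
  also have "\<dots> = set_prob ?H"
    unfolding set_prob_def using H comp_corr_in_comps by (intro sum.cong) auto
  finally show "set_prob ?H = sum comp_prob (comp_corr ` ?H)" ..
qed

lemma max_trace_distribution_in_Lsat:
  assumes "finite_proc T s"
  obtains \<Psi> where "\<Psi> \<in> Lsat T s" and "\<And>\<Phi>. pmf \<Psi> \<Phi> = set_prob (max_comps_tr TZ z0 (formula_trace \<Phi>))"
proof -
  obtain \<Psi> where fin: "finite (set_pmf \<Psi>)"
    and \<Psi>: "\<And>\<Phi>. pmf \<Psi> \<Phi> = set_prob (max_comps_tr TZ z0 (formula_trace \<Phi>))"
    using ex_max_trace_distribution[OF finite_proc_TZ[OF assms]] by blast
  have "\<Psi> \<in> Lsat T s"
    unfolding Lsat_def state_sat_iff_max_comps_tr using fin res \<Psi> by auto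
  from that[OF this \<Psi>] show ?thesis .
qed

end

lemma return_TTop_in_Lsat:
  fixes T :: "('s,'a) pts"
  shows "return_pmf TTop \<in> Lsat T s"
proof -
  have res: "is_resolution T s {0} {} (\<lambda>_. s) 0"
    by (simp add: is_resolution_def)
  have "c \<in> comps {} z \<longleftrightarrow> c = []" for c and z :: nat
    by (cases c) (auto simp: comps_def)
  then have "max_comps_tr ({} :: (nat,'a) pts) 0 [] = {[]}"
    by (auto simp: max_comps_tr_def comps_max_def)
  then have "\<forall>\<Phi>\<in>set_pmf (return_pmf TTop).
      set_prob (max_comps_tr ({} :: (nat,'a) pts) 0 (formula_trace \<Phi>)) = pmf (return_pmf TTop) \<Phi>"
    by (simp add: set_prob_def)
  with res have "state_sat T s (return_pmf TTop)"
    unfolding state_sat_iff_max_comps_tr by blast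
  then show ?thesis by (simp add: Lsat_def)
qed

lemma pmf_Lsat_in_subset_sums:
  assumes "pts_ok T" and "finite_proc T s" and "\<Psi> \<in> Lsat T s"
  shows "pmf \<Psi> \<Phi> \<in> sum comp_prob ` Pow (comps_tr T s (formula_trace \<Phi>))"
proof -
  obtain Z TZ corr z where "is_resolution T s Z TZ corr z"
    and sat: "\<forall>\<Phi>\<in>set_pmf \<Psi>. set_prob (max_comps_tr TZ z (formula_trace \<Phi>)) = pmf \<Psi> \<Phi>"
    using assms(3) unfolding Lsat_def state_sat_iff_max_comps_tr by blast
  then interpret R: resolution T s Z TZ corr z using assms(1) by unfold_locales
  have "pmf \<Psi> \<Phi> = set_prob (max_comps_tr TZ z (formula_trace \<Phi>))"
    using R.pmf_eq_max_comps_tr[OF R.finite_proc_TZ[OF assms(2)] _ sat] assms(3)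
    by (simp add: Lsat_def)
  then show ?thesis using R.set_prob_max_comps_tr_in_subset_sums by simp
qed

lemma finite_pmf_image_Lsat:
  assumes "pts_ok T" and "finite_proc T s"
  shows "finite ((\<lambda>\<Psi>. pmf \<Psi> \<Phi>) ` Lsat T s)"
proof (rule finite_subset)
  show "(\<lambda>\<Psi>. pmf \<Psi> \<Phi>) ` Lsat T s \<subseteq> sum comp_prob ` Pow (comps_tr T s (formula_trace \<Phi>))"
    using pmf_Lsat_in_subset_sums[OF assms] by blast
  show "finite (sum comp_prob ` Pow (comps_tr T s (formula_trace \<Phi>)))"
    using finite_comps_tr[OF assms(1)] by simp
qed

section \<open>Kantorovich and Hausdorff liftings\<close>

definition coupling_cost :: "('a tform \<times> 'a tform) pmf \<Rightarrow> real" where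
  "coupling_cost \<omega> = (\<Sum>p\<in>set_pmf \<omega>. pmf \<omega> p * dtf (fst p) (snd p))"

lemma Dtdf_eq_Inf_coupling_cost: "Dtdf \<Psi>1 \<Psi>2 = Inf (coupling_cost ` {\<omega>. is_coupling \<omega> \<Psi>1 \<Psi>2})"
  by (simp add: Dtdf_def coupling_cost_def setcompr_eq_image)

lemma coupling_cost_nonneg: "0 \<le> coupling_cost \<omega>"
  unfolding coupling_cost_def by (rule sum_nonneg) (simp add: dtf_def)

lemma is_coupling_pair_pmf: "is_coupling (pair_pmf \<Psi>1 \<Psi>2) \<Psi>1 \<Psi>2"
  by (simp add: is_coupling_def map_fst_pair_pmf map_snd_pair_pmf)

lemma finite_set_pmf_coupling:
  assumes "is_coupling \<omega> \<Psi>1 \<Psi>2" and "finite (set_pmf \<Psi>1)" and "finite (set_pmf \<Psi>2)"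
  shows "finite (set_pmf \<omega>)"
proof (rule finite_subset)
  show "set_pmf \<omega> \<subseteq> set_pmf \<Psi>1 \<times> set_pmf \<Psi>2"
  proof
    fix p assume "p \<in> set_pmf \<omega>"
    then have "fst p \<in> set_pmf (map_pmf fst \<omega>)" "snd p \<in> set_pmf (map_pmf snd \<omega>)" by simp_all
    with assms(1) show "p \<in> set_pmf \<Psi>1 \<times> set_pmf \<Psi>2"
      by (simp add: is_coupling_def mem_Times_iff)
  qed
qed (use assms(2,3) in simp)

lemma coupling_cost_eq_prob_neq:
  assumes "finite (set_pmf \<omega>)"
  shows "coupling_cost \<omega> = measure_pmf.prob \<omega> {p. fst p \<noteq> snd p}"
proof -
  have "coupling_cost \<omega> = sum (pmf \<omega>) {p \<in> set_pmf \<omega>. fst p \<noteq> snd p}"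
    unfolding coupling_cost_def sum.inter_filter[OF assms] dtf_def by (intro sum.cong) auto
  also have "\<dots> = measure_pmf.prob \<omega> ({p. fst p \<noteq> snd p} \<inter> set_pmf \<omega>)"
    using assms by (simp add: measure_measure_pmf_finite Collect_conj_eq Int_commute)
  also have "\<dots> = measure_pmf.prob \<omega> {p. fst p \<noteq> snd p}"
    by (rule measure_Int_set_pmf)
  finally show ?thesis .
qed

lemma abs_pmf_diff_le_prob_neq:
  assumes "is_coupling \<omega> \<Psi>1 \<Psi>2"
  shows "\<bar>pmf \<Psi>1 \<Phi> - pmf \<Psi>2 \<Phi>\<bar> \<le> measure_pmf.prob \<omega> {p. fst p \<noteq> snd p}"
proof -
  from assms have "\<Psi>1 = map_pmf fst \<omega>" "\<Psi>2 = map_pmf snd \<omega>"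
    by (simp_all add: is_coupling_def)
  then have marginal: "pmf \<Psi>1 \<Phi> = measure_pmf.prob \<omega> {p. fst p = \<Phi>}"
      "pmf \<Psi>2 \<Phi> = measure_pmf.prob \<omega> {p. snd p = \<Phi>}"
    by (simp_all add: pmf_map vimage_def)
  have le: "measure_pmf.prob \<omega> {p. f p = \<Phi>} \<le>
          measure_pmf.prob \<omega> {p. g p = \<Phi>} + measure_pmf.prob \<omega> {p. fst p \<noteq> snd p}"
    if "\<And>p. f p \<noteq> g p \<Longrightarrow> fst p \<noteq> snd p" for f g :: "'a \<times> 'a \<Rightarrow> 'a"
  proof -
    have "{p. f p = \<Phi>} \<subseteq> {p. g p = \<Phi>} \<union> {p. fst p \<noteq> snd p}"
    proof
      fix p assume "p \<in> {p. f p = \<Phi>}"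
      with that[of p] show "p \<in> {p. g p = \<Phi>} \<union> {p. fst p \<noteq> snd p}" by auto
    qed
    then have "measure_pmf.prob \<omega> {p. f p = \<Phi>} \<le> measure_pmf.prob \<omega> ({p. g p = \<Phi>} \<union> {p. fst p \<noteq> snd p})"
      by (rule measure_pmf.finite_measure_mono) simp
    also have "\<dots> \<le> measure_pmf.prob \<omega> {p. g p = \<Phi>} + measure_pmf.prob \<omega> {p. fst p \<noteq> snd p}"
      by (rule measure_Un_le) simp_all
    finally show ?thesis .
  qed
  have "pmf \<Psi>1 \<Phi> \<le> pmf \<Psi>2 \<Phi> + measure_pmf.prob \<omega> {p. fst p \<noteq> snd p}"
    unfolding marginal by (rule le) simp
  moreover have "pmf \<Psi>2 \<Phi> \<le> pmf \<Psi>1 \<Phi> + measure_pmf.prob \<omega> {p. fst p \<noteq> snd p}"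
    unfolding marginal by (rule le) auto
  ultimately show ?thesis by linarith
qed

lemma Dtdf_nonneg: "0 \<le> Dtdf \<Psi>1 \<Psi>2"
  unfolding Dtdf_eq_Inf_coupling_cost
  by (rule cINF_greatest) (use is_coupling_pair_pmf coupling_cost_nonneg in blast)+

lemma Dtdf_le_coupling_cost: "is_coupling \<omega> \<Psi>1 \<Psi>2 \<Longrightarrow> Dtdf \<Psi>1 \<Psi>2 \<le> coupling_cost \<omega>"
  unfolding Dtdf_eq_Inf_coupling_cost
  by (rule cINF_lower) (auto intro: bdd_belowI2 coupling_cost_nonneg)

lemma Dtdf_self: "Dtdf \<Psi> \<Psi> = 0"
proof -
  let ?\<omega> = "map_pmf (\<lambda>x. (x,x)) \<Psi>"
  have "is_coupling ?\<omega> \<Psi> \<Psi>"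
    by (simp add: is_coupling_def pmf.map_comp o_def)
  moreover have "coupling_cost ?\<omega> = 0"
    unfolding coupling_cost_def by (rule sum.neutral) (auto simp: dtf_def)
  ultimately have "Dtdf \<Psi> \<Psi> \<le> 0"
    by (metis Dtdf_le_coupling_cost)
  with Dtdf_nonneg show ?thesis by (rule antisym[rotated])
qed

lemma Dtdf_le_1:
  assumes "finite (set_pmf \<Psi>1)" and "finite (set_pmf \<Psi>2)"
  shows "Dtdf \<Psi>1 \<Psi>2 \<le> 1"
proof -
  have fin: "finite (set_pmf (pair_pmf \<Psi>1 \<Psi>2))" using assms by simp
  have "Dtdf \<Psi>1 \<Psi>2 \<le> coupling_cost (pair_pmf \<Psi>1 \<Psi>2)"
    by (rule Dtdf_le_coupling_cost[OF is_coupling_pair_pmf])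
  also have "\<dots> = measure_pmf.prob (pair_pmf \<Psi>1 \<Psi>2) {p. fst p \<noteq> snd p}"
    by (rule coupling_cost_eq_prob_neq[OF fin])
  also have "\<dots> \<le> 1" by (rule measure_pmf.prob_le_1)
  finally show ?thesis .
qed

lemma abs_pmf_diff_le_Dtdf:
  assumes "finite (set_pmf \<Psi>1)" and "finite (set_pmf \<Psi>2)"
  shows "\<bar>pmf \<Psi>1 \<Phi> - pmf \<Psi>2 \<Phi>\<bar> \<le> Dtdf \<Psi>1 \<Psi>2"
  unfolding Dtdf_eq_Inf_coupling_cost
proof (rule cINF_greatest)
  show "{\<omega>. is_coupling \<omega> \<Psi>1 \<Psi>2} \<noteq> {}" using is_coupling_pair_pmf by blast
  fix \<omega> assume "\<omega> \<in> {\<omega>. is_coupling \<omega> \<Psi>1 \<Psi>2}"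
  then have "is_coupling \<omega> \<Psi>1 \<Psi>2" by simp
  with finite_set_pmf_coupling[OF this assms] show "\<bar>pmf \<Psi>1 \<Phi> - pmf \<Psi>2 \<Phi>\<bar> \<le> coupling_cost \<omega>"
    by (simp add: coupling_cost_eq_prob_neq abs_pmf_diff_le_prob_neq)
qed

lemma INF_in_unit_interval:
  fixes f :: "'b \<Rightarrow> real"
  assumes "A \<noteq> {}" and "\<And>a. a \<in> A \<Longrightarrow> 0 \<le> f a \<and> f a \<le> 1"
  shows "0 \<le> Inf (f ` A) \<and> Inf (f ` A) \<le> 1"
proof
  show "0 \<le> Inf (f ` A)" using assms by (intro cINF_greatest) blast+
  obtain a where "a \<in> A" using assms(1) by blast
  have "bdd_below (f ` A)" by (rule bdd_belowI2[where m = 0]) (use assms(2) in blast)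
  then show "Inf (f ` A) \<le> 1" using \<open>a \<in> A\<close> assms(2)[OF \<open>a \<in> A\<close>] by (intro cINF_lower2) blast+
qed

lemma SUP_unit_interval_eq_0_iff:
  fixes f :: "'b \<Rightarrow> real"
  assumes "A \<noteq> {}" and "\<And>a. a \<in> A \<Longrightarrow> 0 \<le> f a \<and> f a \<le> 1"
  shows "0 \<le> Sup (f ` A)" and "Sup (f ` A) = 0 \<longleftrightarrow> (\<forall>a\<in>A. f a = 0)"
proof -
  have bdd: "bdd_above (f ` A)" by (rule bdd_aboveI2[where M = 1]) (use assms(2) in blast)
  obtain a where "a \<in> A" using assms(1) by blast
  with bdd show "0 \<le> Sup (f ` A)" using assms(2)[OF \<open>a \<in> A\<close>] by (intro cSUP_upper2) blast+
  show "Sup (f ` A) = 0 \<longleftrightarrow> (\<forall>a\<in>A. f a = 0)"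
  proof
    assume "Sup (f ` A) = 0"
    show "\<forall>a\<in>A. f a = 0"
    proof
      fix a assume "a \<in> A"
      then have "f a \<le> Sup (f ` A)" using bdd by (rule cSUP_upper)
      with \<open>Sup (f ` A) = 0\<close> assms(2)[OF \<open>a \<in> A\<close>] show "f a = 0" by simp
    qed
  next
    assume "\<forall>a\<in>A. f a = 0"
    with assms(1) have "f ` A = {0}" by auto
    then show "Sup (f ` A) = 0" by simp
  qed
qed

lemma hausdorff_eq_0_iff:
  fixes D :: "'b \<Rightarrow> 'b \<Rightarrow> real"
  assumes "X \<noteq> {}" and "Y \<noteq> {}"
    and D: "\<And>x y. x \<in> X \<union> Y \<Longrightarrow> y \<in> X \<union> Y \<Longrightarrow> 0 \<le> D x y \<and> D x y \<le> 1"
  shows "hausdorff D X Y = 0 \<longleftrightarrow> (\<forall>x\<in>X. Inf (D x ` Y) = 0) \<and> (\<forall>y\<in>Y. Inf (D y ` X) = 0)"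
proof -
  have X_bounds: "0 \<le> Inf (D x ` Y) \<and> Inf (D x ` Y) \<le> 1" if "x \<in> X" for x
    using assms(2) by (rule INF_in_unit_interval) (use D that in blast)
  have Y_bounds: "0 \<le> Inf (D y ` X) \<and> Inf (D y ` X) \<le> 1" if "y \<in> Y" for y
    using assms(1) by (rule INF_in_unit_interval) (use D that in blast)
  note SX = SUP_unit_interval_eq_0_iff[OF assms(1) X_bounds]
  note SY = SUP_unit_interval_eq_0_iff[OF assms(2) Y_bounds]
  have max_eq_0: "max a b = 0 \<longleftrightarrow> a = 0 \<and> b = 0" if "0 \<le> a" "0 \<le> b" for a b :: real
    using that by (auto simp: max_def)
  have "hausdorff D X Y = max (Sup ((\<lambda>x. Inf (D x ` Y)) ` X)) (Sup ((\<lambda>y. Inf (D y ` X)) ` Y))"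
    unfolding hausdorff_def sup0_def inf1_def using assms(1,2) by simp
  also have "\<dots> = 0 \<longleftrightarrow> (\<forall>x\<in>X. Inf (D x ` Y) = 0) \<and> (\<forall>y\<in>Y. Inf (D y ` X) = 0)"
    using SX SY by (simp add: max_eq_0)
  finally show ?thesis .
qed

section \<open>Distance zero and trace equivalence\<close>

lemma mem_if_Inf_Dtdf_eq_0:
  assumes "L \<noteq> {}" and fin_L: "\<And>\<Psi>'. \<Psi>' \<in> L \<Longrightarrow> finite (set_pmf \<Psi>')"
    and fin_values: "\<And>\<Phi>. finite ((\<lambda>\<Psi>'. pmf \<Psi>' \<Phi>) ` L)"
    and fin: "finite (set_pmf \<Psi>)" and Inf_0: "Inf (Dtdf \<Psi> ` L) = 0"
  shows "\<Psi> \<in> L"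
proof -
  \<comment> \<open>a member of \<open>L\<close> closer to \<open>\<Psi>\<close> than every nonzero gap must agree with \<open>\<Psi>\<close> on its support\<close>
  define gaps where
    "gaps = (\<Union>\<Phi>\<in>set_pmf \<Psi>. (\<lambda>\<Psi>'. \<bar>pmf \<Psi> \<Phi> - pmf \<Psi>' \<Phi>\<bar>) ` L) - {0}"
  have "finite gaps"
  proof -
    have "(\<lambda>\<Psi>'. \<bar>pmf \<Psi> \<Phi> - pmf \<Psi>' \<Phi>\<bar>) ` L = (\<lambda>v. \<bar>pmf \<Psi> \<Phi> - v\<bar>) ` (\<lambda>\<Psi>'. pmf \<Psi>' \<Phi>) ` L" for \<Phi>
      by (simp add: image_image)
    then show ?thesis unfolding gaps_def using fin fin_values by simp
  qed
  define \<delta> where "\<delta> = Min (insert 1 gaps)"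
  have "0 < g" if "g \<in> gaps" for g
    using that unfolding gaps_def by auto
  with \<open>finite gaps\<close> have "0 < \<delta>" unfolding \<delta>_def by simp
  have "bdd_below (Dtdf \<Psi> ` L)" by (rule bdd_belowI2[where m = 0]) (rule Dtdf_nonneg)
  moreover have "Inf (Dtdf \<Psi> ` L) < \<delta>" using Inf_0 \<open>0 < \<delta>\<close> by simp
  ultimately have "\<exists>\<Psi>'\<in>L. Dtdf \<Psi> \<Psi>' < \<delta>" using assms(1) by (simp add: cINF_less_iff)
  then obtain \<Psi>' where "\<Psi>' \<in> L" and close: "Dtdf \<Psi> \<Psi>' < \<delta>" by blast
  have "pmf \<Psi>' \<Phi> = pmf \<Psi> \<Phi>" if "\<Phi> \<in> set_pmf \<Psi>" for \<Phi>
  proof (rule ccontr)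
    assume "pmf \<Psi>' \<Phi> \<noteq> pmf \<Psi> \<Phi>"
    with that \<open>\<Psi>' \<in> L\<close> have "\<bar>pmf \<Psi> \<Phi> - pmf \<Psi>' \<Phi>\<bar> \<in> gaps" unfolding gaps_def by auto
    then have "\<delta> \<le> \<bar>pmf \<Psi> \<Phi> - pmf \<Psi>' \<Phi>\<bar>" unfolding \<delta>_def using \<open>finite gaps\<close> by simp
    also have "\<dots> \<le> Dtdf \<Psi> \<Psi>'" by (rule abs_pmf_diff_le_Dtdf[OF fin fin_L[OF \<open>\<Psi>' \<in> L\<close>]])
    finally show False using close by simp
  qed
  then have "\<Psi> = \<Psi>'" by (rule pmf_eq_if_agree_on_set_pmf[OF fin])
  with \<open>\<Psi>' \<in> L\<close> show ?thesis by simp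
qed

lemma finite_set_pmf_of_Lsat: "\<Psi> \<in> Lsat T s \<Longrightarrow> finite (set_pmf \<Psi>)"
  by (simp add: Lsat_def)

lemma Inf_Dtdf_Lsat_eq_0_iff:
  assumes "pts_ok T" and "finite_proc T s" and "finite (set_pmf \<Psi>)"
  shows "Inf (Dtdf \<Psi> ` Lsat T s) = 0 \<longleftrightarrow> \<Psi> \<in> Lsat T s"
proof
  assume Inf_0: "Inf (Dtdf \<Psi> ` Lsat T s) = 0"
  have "Lsat T s \<noteq> {}" using return_TTop_in_Lsat[of T s] by auto
  then show "\<Psi> \<in> Lsat T s"
    using finite_set_pmf_of_Lsat finite_pmf_image_Lsat[OF assms(1,2)] assms(3) Inf_0
    by (rule mem_if_Inf_Dtdf_eq_0[where L = "Lsat T s"])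
next
  assume "\<Psi> \<in> Lsat T s"
  then have "0 \<in> Dtdf \<Psi> ` Lsat T s" by (metis Dtdf_self image_eqI)
  then show "Inf (Dtdf \<Psi> ` Lsat T s) = 0"
    by (rule cInf_eq_minimum) (auto simp: Dtdf_nonneg)
qed

lemma DL_eq_0_iff_Lsat_eq:
  assumes "pts_ok T" and "finite_proc T s" and "finite_proc T t"
  shows "DL T s t = 0 \<longleftrightarrow> Lsat T s = Lsat T t"
proof -
  have "DL T s t = 0 \<longleftrightarrow>
          (\<forall>\<Psi>\<in>Lsat T s. Inf (Dtdf \<Psi> ` Lsat T t) = 0) \<and> (\<forall>\<Psi>\<in>Lsat T t. Inf (Dtdf \<Psi> ` Lsat T s) = 0)"
    unfolding DL_def
  proof (rule hausdorff_eq_0_iff)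
    show "Lsat T s \<noteq> {}" using return_TTop_in_Lsat[of T s] by auto
    show "Lsat T t \<noteq> {}" using return_TTop_in_Lsat[of T t] by auto
    fix \<Psi>1 \<Psi>2 assume "\<Psi>1 \<in> Lsat T s \<union> Lsat T t" "\<Psi>2 \<in> Lsat T s \<union> Lsat T t"
    then have "finite (set_pmf \<Psi>1)" "finite (set_pmf \<Psi>2)" by (auto simp: Lsat_def)
    then show "0 \<le> Dtdf \<Psi>1 \<Psi>2 \<and> Dtdf \<Psi>1 \<Psi>2 \<le> 1" by (simp add: Dtdf_nonneg Dtdf_le_1)
  qed
  also have "\<dots> \<longleftrightarrow> Lsat T s \<subseteq> Lsat T t \<and> Lsat T t \<subseteq> Lsat T s"
    using Inf_Dtdf_Lsat_eq_0_iff[OF assms(1,3) finite_set_pmf_of_Lsat, of _ T s]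
      Inf_Dtdf_Lsat_eq_0_iff[OF assms(1,2) finite_set_pmf_of_Lsat, of _ T t]
    by blast
  finally show ?thesis by blast
qed

definition trace_dominated :: "('s,'a) pts \<Rightarrow> 's \<Rightarrow> 's \<Rightarrow> bool" where
  "trace_dominated T s t \<longleftrightarrow>
    (\<forall>Z TZ corr z. is_resolution T s Z TZ corr z \<longrightarrow>
       (\<exists>Z' TZ' corr' z'. is_resolution T t Z' TZ' corr' z' \<and>
          (\<forall>\<alpha>. set_prob (comps_tr TZ z \<alpha>) = set_prob (comps_tr TZ' z' \<alpha>))))"

lemma trace_equiv_iff_dominated: "trace_equiv T s t \<longleftrightarrow> trace_dominated T s t \<and> trace_dominated T t s"
  unfolding trace_equiv_def trace_dominated_def by (rule refl)

lemma trace_probs_eq_iff_max_trace_probs_eq: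
  assumes "pts_ok T" and "finite_proc T s" and "finite_proc T t"
    and "is_resolution T s Z TZ corr z" and "is_resolution T t Z' TZ' corr' z'"
  shows "(\<forall>\<alpha>. set_prob (comps_tr TZ z \<alpha>) = set_prob (comps_tr TZ' z' \<alpha>)) \<longleftrightarrow>
         (\<forall>\<alpha>. set_prob (max_comps_tr TZ z \<alpha>) = set_prob (max_comps_tr TZ' z' \<alpha>))"
proof -
  interpret R: resolution T s Z TZ corr z using assms(1,4) by unfold_locales
  interpret R': resolution T t Z' TZ' corr' z' using assms(1,5) by unfold_locales
  show ?thesis
    by (rule comps_tr_probs_eq_iff_max_comps_tr_probs_eq[OF R.det_pts_axioms R'.det_pts_axioms
          R.finite_proc_TZ[OF assms(2)] R'.finite_proc_TZ[OF assms(3)]])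
qed

lemma Lsat_subset_if_trace_dominated:
  assumes "pts_ok T" and "finite_proc T s" and "finite_proc T t" and "trace_dominated T s t"
  shows "Lsat T s \<subseteq> Lsat T t"
proof
  fix \<Psi> assume "\<Psi> \<in> Lsat T s"
  then obtain Z TZ corr z where fin: "finite (set_pmf \<Psi>)" and res: "is_resolution T s Z TZ corr z"
    and sat: "\<forall>\<Phi>\<in>set_pmf \<Psi>. set_prob (max_comps_tr TZ z (formula_trace \<Phi>)) = pmf \<Psi> \<Phi>"
    unfolding Lsat_def state_sat_iff_max_comps_tr by blast
  from assms(4) res obtain Z' TZ' corr' z' where res': "is_resolution T t Z' TZ' corr' z'"
    and "\<forall>\<alpha>. set_prob (comps_tr TZ z \<alpha>) = set_prob (comps_tr TZ' z' \<alpha>)"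
    unfolding trace_dominated_def by blast
  then have "\<forall>\<alpha>. set_prob (max_comps_tr TZ z \<alpha>) = set_prob (max_comps_tr TZ' z' \<alpha>)"
    using trace_probs_eq_iff_max_trace_probs_eq[OF assms(1-3) res res'] by blast
  with sat have "\<forall>\<Phi>\<in>set_pmf \<Psi>. set_prob (max_comps_tr TZ' z' (formula_trace \<Phi>)) = pmf \<Psi> \<Phi>"
    by simp
  with res' have "state_sat T t \<Psi>" unfolding state_sat_iff_max_comps_tr by blast
  with fin show "\<Psi> \<in> Lsat T t" by (simp add: Lsat_def)
qed

lemma trace_dominated_if_Lsat_subset:
  assumes "pts_ok T" and "finite_proc T s" and "finite_proc T t" and "Lsat T s \<subseteq> Lsat T t"
  shows "trace_dominated T s t"
  unfolding trace_dominated_def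
proof (intro allI impI)
  fix Z TZ corr z assume res: "is_resolution T s Z TZ corr z"
  interpret R: resolution T s Z TZ corr z using assms(1) res by unfold_locales
  obtain \<Psi> where "\<Psi> \<in> Lsat T s"
    and \<Psi>: "\<And>\<Phi>. pmf \<Psi> \<Phi> = set_prob (max_comps_tr TZ z (formula_trace \<Phi>))"
    using R.max_trace_distribution_in_Lsat[OF assms(2)] by blast
  with assms(4) have fin: "finite (set_pmf \<Psi>)" and "state_sat T t \<Psi>"
    by (auto simp: Lsat_def)
  then obtain Z' TZ' corr' z' where res': "is_resolution T t Z' TZ' corr' z'"
    and sat': "\<forall>\<Phi>\<in>set_pmf \<Psi>. set_prob (max_comps_tr TZ' z' (formula_trace \<Phi>)) = pmf \<Psi> \<Phi>"
    unfolding state_sat_iff_max_comps_tr by blast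
  interpret R': resolution T t Z' TZ' corr' z' using assms(1) res' by unfold_locales
  have "set_prob (max_comps_tr TZ z \<alpha>) = set_prob (max_comps_tr TZ' z' \<alpha>)" for \<alpha>
    using R'.pmf_eq_max_comps_tr[OF R'.finite_proc_TZ[OF assms(3)] fin sat', of "trace_formula \<alpha>"]
      \<Psi>[of "trace_formula \<alpha>"]
    by simp
  with res' trace_probs_eq_iff_max_trace_probs_eq[OF assms(1-3) res res']
  show "\<exists>Z' TZ' corr' z'. is_resolution T t Z' TZ' corr' z' \<and>
          (\<forall>\<alpha>. set_prob (comps_tr TZ z \<alpha>) = set_prob (comps_tr TZ' z' \<alpha>))"
    by blast
qed

lemma trace_dominated_iff_Lsat_subset:
  assumes "pts_ok T" and "finite_proc T s" and "finite_proc T t"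
  shows "trace_dominated T s t \<longleftrightarrow> Lsat T s \<subseteq> Lsat T t"
  using Lsat_subset_if_trace_dominated[OF assms] trace_dominated_if_Lsat_subset[OF assms] by blast

theorem theorem16:
  fixes T :: "('s,'a) pts" and s t :: 's
  assumes "pts_ok T" and "finite_proc T s" and "finite_proc T t"
  shows "DL T s t = 0 \<longleftrightarrow> trace_equiv T s t"
proof -
  have "DL T s t = 0 \<longleftrightarrow> Lsat T s \<subseteq> Lsat T t \<and> Lsat T t \<subseteq> Lsat T s"
    using DL_eq_0_iff_Lsat_eq[OF assms] by blast
  also have "\<dots> \<longleftrightarrow> trace_dominated T s t \<and> trace_dominated T t s"
    by (simp add: trace_dominated_iff_Lsat_subset[OF assms] trace_dominated_iff_Lsat_subset[OF assms(1,3,2)])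
  also have "\<dots> \<longleftrightarrow> trace_equiv T s t"
    by (rule trace_equiv_iff_dominated[symmetric])
  finally show ?thesis .
qed

end
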